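(* Let $P$ be the transition matrix of a Markov chain on a countable state space. For $\alpha\in[0,1]$ define the transition matrix $Q:=\alpha I+(1-\alpha)P$. For a state $x$ and $k\ge1$, let $p_k(x)$ and $q_k(x)$ be the return probabilities to $x$ after $k$ steps for the chains with transition matrices $P$ and $Q$ respectively, started at $x$. Then $$\sum_{k\ge1} \frac{q_k(x)}{k}=-\log(1-\alpha)+\sum_{k\ge1}\frac{p_k(x)}{k}.$$ *)

theory Defs
  imports "HOL-Analysis.Analysis" "HOL-Library.Extended_Real"
begin

definition stochastic :: "('a \<Rightarrow> 'a \<Rightarrow> real) \<Rightarrow> bool" where
  "stochastic P \<longleftrightarrow> (\<forall>x y. 0 \<le> P x y) \<and> (\<forall>x. (P x has_sum 1) UNIV)"

fun mpow :: "('a \<Rightarrow> 'a \<Rightarrow> real) \<Rightarrow> nat \<Rightarrow> 'a \<Rightarrow> 'a \<Rightarrow> real" where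
  "mpow P 0 x y = (if x = y then 1 else 0)"
| "mpow P (Suc n) x y = (\<Sum>\<^sub>\<infinity>z. mpow P n x z * P z y)"

definition lazy :: "real \<Rightarrow> ('a \<Rightarrow> 'a \<Rightarrow> real) \<Rightarrow> 'a \<Rightarrow> 'a \<Rightarrow> real" where
  "lazy \<alpha> P x y = \<alpha> * (if x = y then 1 else 0) + (1 - \<alpha>) * P x y"

definition ret_prob :: "('a \<Rightarrow> 'a \<Rightarrow> real) \<Rightarrow> nat \<Rightarrow> 'a \<Rightarrow> real" where
  "ret_prob P k x = mpow P k x x"

definition neg_log1m :: "real \<Rightarrow> ereal" where
  "neg_log1m \<alpha> = (if \<alpha> = 1 then \<infinity> else ereal (- ln (1 - \<alpha>)))"

end

theory Submission
  imports Defs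
begin

text \<open>Since I and P commute, Q^k = (\<Sum>j\<le>k. (k choose j) \<alpha>^(k-j) (1-\<alpha>)^j P^j), hence
  q_k/k = \<alpha>^k/k + (\<Sum>j=1..k. w_k_j p_j) with w_k_j = (k choose j) \<alpha>^(k-j) (1-\<alpha>)^j / k.
  All terms are nonnegative, so the double series may be summed over k first.
  As (k choose j)/k = (k-1 choose j-1)/j, the negative binomial series gives
  (\<Sum>k. w_k_j) = 1/j for \<alpha> < 1, and (\<Sum>k. \<alpha>^k/k) = -ln(1-\<alpha>).
  For \<alpha> = 1 the latter series diverges and both sides are infinite.\<close>

lemma stochastic_nonneg: "stochastic P \<Longrightarrow> 0 \<le> P x y"
  by (simp add: stochastic_def)

lemma stochastic_row_has_sum: "stochastic P \<Longrightarrow> (P x has_sum 1) UNIV"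
  by (simp add: stochastic_def)

lemma stochastic_le_1:
  assumes "stochastic P"
  shows "P x y \<le> 1"
proof -
  have "infsum (P x) {y} \<le> infsum (P x) UNIV"
    using assms by (intro infsum_mono_neutral)
      (auto simp: stochastic_def summable_on_def intro: has_sum_finiteI)
  then show ?thesis
    using infsumI[OF stochastic_row_has_sum[OF assms]] by simp
qed

lemma stochastic_summable_mult:
  assumes "stochastic P" "M summable_on UNIV" "\<And>z. 0 \<le> M z"
  shows "(\<lambda>z. M z * P z y) summable_on UNIV"
  using assms stochastic_nonneg[OF assms(1)] stochastic_le_1[OF assms(1)]
  by (intro summable_on_comparison_test[OF assms(2)]) (auto intro: mult_left_le)

lemma stochastic_mult:
  assumes M: "stochastic M" and P: "stochastic P"
  shows "stochastic (\<lambda>x y. \<Sum>\<^sub>\<infinity>z. M x z * P z y)"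
  unfolding stochastic_def
proof (intro conjI allI)
  fix x y
  show "0 \<le> (\<Sum>\<^sub>\<infinity>z. M x z * P z y)"
    using M P by (intro infsum_nonneg) (simp add: stochastic_nonneg)
next
  fix x
  define f where "f = (\<lambda>(z, y). M x z * P z y)"
  have rows: "((\<lambda>y. f (z, y)) has_sum M x z) UNIV" for z
    using has_sum_cmult_right[OF stochastic_row_has_sum[OF P], of "M x z"]
    by (simp add: f_def)
  have "f summable_on UNIV \<times> UNIV"
  proof (rule summable_on_SigmaI[where B = "\<lambda>_. UNIV", OF rows])
    show "M x summable_on UNIV"
      using stochastic_row_has_sum[OF M] by (auto simp: summable_on_def)
    show "0 \<le> f (z, y)" for z y
      using M P by (simp add: f_def stochastic_nonneg)
  qed
  then have "(f has_sum 1) (UNIV \<times> UNIV)"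
    using has_sum_SigmaI[where B = "\<lambda>_. UNIV", OF rows stochastic_row_has_sum[OF M]] by blast
  then have swapped: "((\<lambda>(y, z). f (z, y)) has_sum 1) (UNIV \<times> UNIV)"
    by (subst (asm) has_sum_swap) simp
  have "(\<lambda>z. f (z, y)) summable_on UNIV" for y
    using summable_on_SigmaD1[of "\<lambda>y z. f (z, y)" UNIV "\<lambda>_. UNIV" y] swapped
    by (auto simp: summable_on_def)
  then have "((\<lambda>z. f (z, y)) has_sum (\<Sum>\<^sub>\<infinity>z. M x z * P z y)) UNIV" for y
    by (simp add: f_def)
  then show "((\<lambda>y. \<Sum>\<^sub>\<infinity>z. M x z * P z y) has_sum 1) UNIV"
    using has_sum_Sigma'[OF swapped, of "\<lambda>y. \<Sum>\<^sub>\<infinity>z. M x z * P z y"] by simp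
qed

lemma stochastic_mpow:
  assumes "stochastic P"
  shows "stochastic (mpow P n)"
proof (induction n)
  case 0
  have "(mpow P 0 x has_sum 1) UNIV" for x
    by (rule has_sum_finite_neutralI[of "{x}"]) auto
  moreover have "0 \<le> mpow P 0 x y" for x y
    by simp
  ultimately show ?case
    unfolding stochastic_def by blast
next
  case (Suc n)
  have "mpow P (Suc n) = (\<lambda>x y. \<Sum>\<^sub>\<infinity>z. mpow P n x z * P z y)"
    by (intro ext) simp
  then show ?case
    using stochastic_mult[OF Suc assms] by simp
qed

lemma mpow_Suc_has_sum:
  assumes "stochastic P"
  shows "((\<lambda>z. mpow P n x z * P z y) has_sum mpow P (Suc n) x y) UNIV"
proof -
  have "(\<lambda>z. mpow P n x z * P z y) summable_on UNIV"
    using stochastic_mpow[OF assms] assms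
    by (intro stochastic_summable_mult)
      (auto simp: stochastic_nonneg summable_on_def intro: stochastic_row_has_sum)
  then show ?thesis by simp
qed

lemma stochastic_lazy:
  assumes "stochastic P" "0 \<le> \<alpha>" "\<alpha> \<le> 1"
  shows "stochastic (lazy \<alpha> P)"
  unfolding stochastic_def
proof (intro conjI allI)
  fix x y
  show "0 \<le> lazy \<alpha> P x y"
    using assms by (simp add: lazy_def stochastic_nonneg)
next
  show "(lazy \<alpha> P x has_sum 1) UNIV" for x
  proof -
    have "((\<lambda>y. \<alpha> * (if x = y then 1 else 0)) has_sum \<alpha>) UNIV"
      by (rule has_sum_finite_neutralI[of "{x}"]) auto
    moreover have "((\<lambda>y. (1 - \<alpha>) * P x y) has_sum (1 - \<alpha>)) UNIV"
      using has_sum_cmult_right[OF stochastic_row_has_sum[OF assms(1)]] by simp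
    ultimately show ?thesis
      unfolding lazy_def using has_sum_add by fastforce
  qed
qed

lemma ret_prob_nonneg: "stochastic P \<Longrightarrow> 0 \<le> ret_prob P k x"
  unfolding ret_prob_def by (intro stochastic_nonneg stochastic_mpow)

lemma binomial_sum_Suc:
  fixes a b :: "'a::comm_semiring_1" and m :: "nat \<Rightarrow> 'a"
  shows "(\<Sum>j\<le>Suc k. of_nat (Suc k choose j) * a^(Suc k - j) * b^j * m j)
       = a * (\<Sum>j\<le>k. of_nat (k choose j) * a^(k - j) * b^j * m j)
       + b * (\<Sum>j\<le>k. of_nat (k choose j) * a^(k - j) * b^j * m (Suc j))"
proof -
  have "a * (\<Sum>j\<le>k. of_nat (k choose j) * a^(k - j) * b^j * m j)
      = (\<Sum>j\<le>Suc k. of_nat (k choose j) * a^(Suc k - j) * b^j * m j)"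
    by (simp add: sum_distrib_left Suc_diff_le binomial_eq_0 mult_ac)
  also have "\<dots> = a^Suc k * m 0
      + (\<Sum>i\<le>k. of_nat (k choose Suc i) * a^(k - i) * b^Suc i * m (Suc i))"
    by (subst sum.atMost_Suc_shift) simp
  finally have left: "a * (\<Sum>j\<le>k. of_nat (k choose j) * a^(k - j) * b^j * m j) = \<dots>" .
  have right: "b * (\<Sum>j\<le>k. of_nat (k choose j) * a^(k - j) * b^j * m (Suc j))
      = (\<Sum>i\<le>k. of_nat (k choose i) * a^(k - i) * b^Suc i * m (Suc i))"
    by (simp add: sum_distrib_left mult_ac)
  have "(\<Sum>j\<le>Suc k. of_nat (Suc k choose j) * a^(Suc k - j) * b^j * m j)
      = a^Suc k * m 0
      + (\<Sum>i\<le>k. of_nat (Suc k choose Suc i) * a^(k - i) * b^Suc i * m (Suc i))"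
    by (subst sum.atMost_Suc_shift) simp
  also have "\<dots> = a^Suc k * m 0
      + (\<Sum>i\<le>k. of_nat (k choose Suc i) * a^(k - i) * b^Suc i * m (Suc i))
      + (\<Sum>i\<le>k. of_nat (k choose i) * a^(k - i) * b^Suc i * m (Suc i))"
    by (simp add: sum.distrib distrib_right add_ac)
  finally show ?thesis
    using left right by simp
qed

lemma has_sum_sum:
  fixes f :: "'i \<Rightarrow> 'b \<Rightarrow> 'a::topological_comm_monoid_add"
  assumes "finite I" "\<And>i. i \<in> I \<Longrightarrow> (f i has_sum s i) A"
  shows "((\<lambda>x. \<Sum>i\<in>I. f i x) has_sum (\<Sum>i\<in>I. s i)) A"
  using assms by (induction I rule: finite_induct) (auto intro: has_sum_add)

lemma mpow_lazy:
  assumes "stochastic P"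
  shows "mpow (lazy \<alpha> P) k x y
       = (\<Sum>j\<le>k. real (k choose j) * \<alpha>^(k - j) * (1 - \<alpha>)^j * mpow P j x y)"
proof (induction k arbitrary: y)
  case 0
  show ?case by simp
next
  case (Suc k)
  define c where "c j = real (k choose j) * \<alpha>^(k - j) * (1 - \<alpha>)^j" for j
  have split: "mpow (lazy \<alpha> P) k x z * lazy \<alpha> P z y
      = (if z = y then \<alpha> * (\<Sum>j\<le>k. c j * mpow P j x z) else 0)
      + (1 - \<alpha>) * (\<Sum>j\<le>k. c j * (mpow P j x z * P z y))" for z
  proof -
    have "(\<Sum>j\<le>k. c j * mpow P j x z) * P z y = (\<Sum>j\<le>k. c j * (mpow P j x z * P z y))"
      by (simp add: sum_distrib_right mult.assoc)
    then show ?thesis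
      unfolding Suc.IH lazy_def c_def by (cases "z = y") (simp_all add: algebra_simps)
  qed
  have stay: "((\<lambda>z. if z = y then \<alpha> * (\<Sum>j\<le>k. c j * mpow P j x z) else 0)
      has_sum \<alpha> * (\<Sum>j\<le>k. c j * mpow P j x y)) UNIV"
    by (rule has_sum_finite_neutralI[of "{y}"]) auto
  have move: "((\<lambda>z. (1 - \<alpha>) * (\<Sum>j\<le>k. c j * (mpow P j x z * P z y)))
      has_sum (1 - \<alpha>) * (\<Sum>j\<le>k. c j * mpow P (Suc j) x y)) UNIV"
    by (intro has_sum_cmult_right has_sum_sum mpow_Suc_has_sum assms) simp
  have "mpow (lazy \<alpha> P) (Suc k) x y
      = \<alpha> * (\<Sum>j\<le>k. c j * mpow P j x y) + (1 - \<alpha>) * (\<Sum>j\<le>k. c j * mpow P (Suc j) x y)"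
    using has_sum_add[OF stay move] unfolding split[symmetric] by (simp add: infsumI)
  also have "\<dots> = (\<Sum>j\<le>Suc k. real (Suc k choose j) * \<alpha>^(Suc k - j) * (1 - \<alpha>)^j * mpow P j x y)"
    using binomial_sum_Suc[of k \<alpha> "1 - \<alpha>" "\<lambda>j. mpow P j x y"] by (simp add: c_def)
  finally show ?case .
qed

lemma negative_binomial_series:
  fixes a :: real
  assumes "\<bar>a\<bar> < 1"
  shows "(\<lambda>m. real (m + i choose i) * a^m) sums (1 / (1 - a)^Suc i)"
proof -
  have "(\<lambda>m. (- real (Suc i) gchoose m) * (-a)^m) sums (1 + -a) powr (- real (Suc i))"
    using assms by (intro gen_binomial_real) simp
  moreover have "(- real (Suc i) gchoose m) * (-a)^m = real (m + i choose i) * a^m" for m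
  proof -
    have "(- real (Suc i) gchoose m) = (-1)^m * (real (m + i) gchoose m)"
      by (subst gbinomial_minus) (simp add: add_ac)
    also have "real (m + i) gchoose m = real (m + i choose m)"
      by (simp add: binomial_gbinomial)
    also have "m + i choose m = m + i choose i"
      using binomial_symmetric[of m "m + i"] by simp
    finally have "(- real (Suc i) gchoose m) = (-1)^m * real (m + i choose i)" .
    moreover have "(-a)^m = (-1)^m * a^m"
      by (rule power_minus)
    moreover have "(-1::real)^m * (-1)^m = 1"
      by (simp flip: power_mult_distrib)
    ultimately show ?thesis
      by (metis mult.assoc mult.commute mult_1)
  qed
  moreover have "(1 + -a) powr (- real (Suc i)) = 1 / (1 - a)^Suc i"
  proof -
    have "(1 - a) powr real (Suc i) = (1 - a)^Suc i"
      using assms by (intro powr_realpow) simp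
    then show ?thesis
      by (simp only: powr_minus) (simp add: divide_inverse)
  qed
  ultimately show ?thesis by simp
qed

lemma binomial_div_weight_sums:
  fixes a :: real
  assumes "\<bar>a\<bar> < 1" "0 < j"
  shows "(\<lambda>k. real (k choose j) * a^(k - j) * (1 - a)^j / real k) sums (1 / real j)"
proof -
  obtain i where j: "j = Suc i"
    using assms(2) gr0_implies_Suc by blast
  have "real (m + j choose j) * real j = real (m + i choose i) * real (m + j)" for m
    using Suc_times_binomial_eq[of "m + i" i] unfolding j
    by (metis of_nat_mult add_Suc_right mult.commute)
  then have binomial_div: "real (m + j choose j) / real (m + j) = real (m + i choose i) / real j"
    for m
    using assms(2) by (subst frac_eq_eq) auto
  have shifted: "real (m + j choose j) * a^(m + j - j) * (1 - a)^j / real (m + j)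
      = real (m + i choose i) * a^m * ((1 - a)^j / real j)" for m
  proof -
    have "real (m + j choose j) * a^(m + j - j) * (1 - a)^j / real (m + j)
        = real (m + j choose j) / real (m + j) * (a^m * (1 - a)^j)"
      by simp
    also have "\<dots> = real (m + i choose i) * a^m * ((1 - a)^j / real j)"
      by (simp only: binomial_div) simp
    finally show ?thesis .
  qed
  have "(\<lambda>m. real (m + i choose i) * a^m * ((1 - a)^j / real j))
      sums (1 / (1 - a)^j * ((1 - a)^j / real j))"
    unfolding j by (intro sums_mult2 negative_binomial_series assms(1))
  also have "1 / (1 - a)^j * ((1 - a)^j / real j) = 1 / real j"
    using assms(1) by simp
  finally have "(\<lambda>m. real (m + j choose j) * a^(m + j - j) * (1 - a)^j / real (m + j))
      sums (1 / real j)"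
    unfolding shifted .
  then show ?thesis
    by (rule sums_zero_iff_shift[THEN iffD1, rotated]) simp
qed

lemma power_div_series:
  fixes a :: real
  assumes "\<bar>a\<bar> < 1"
  shows "(\<lambda>k. a^Suc k / real (Suc k)) sums (- ln (1 - a))"
proof -
  have "(\<lambda>n. - ((- (- a))^n) / real n) sums ln (1 + - a)"
    using assms by (intro ln_series') simp
  then have "(\<lambda>n. a^n / real n) sums (- ln (1 - a))"
    using sums_minus by fastforce
  then show ?thesis
    by (subst sums_Suc_iff) simp
qed

lemma neg_log1m_series:
  assumes "0 \<le> a" "a \<le> 1"
  shows "(\<Sum>k. ereal (a^Suc k / real (Suc k))) = neg_log1m a"
proof (cases "a = 1")
  case True
  have "\<not> summable (\<lambda>k. 1 / real (Suc k))"
    using not_summable_harmonic[where 'a = real] summable_Suc_iff[of "\<lambda>n. 1 / real n"]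
    by (simp add: divide_inverse)
  then show ?thesis
    using summable_ereal[of "\<lambda>k. 1 / real (Suc k)"] True by (auto simp: neg_log1m_def)
next
  case False
  with assms have "\<bar>a\<bar> < 1"
    by simp
  then have "(\<lambda>k. ereal (a^Suc k / real (Suc k))) sums ereal (- ln (1 - a))"
    by (simp only: sums_ereal power_div_series)
  then show ?thesis
    using False by (simp add: sums_iff neg_log1m_def)
qed

definition lazy_weight :: "real \<Rightarrow> nat \<Rightarrow> nat \<Rightarrow> real" where
  "lazy_weight \<alpha> k j = real (k choose j) * \<alpha>^(k - j) * (1 - \<alpha>)^j / real k"

lemma lazy_weight_nonneg: "0 \<le> \<alpha> \<Longrightarrow> \<alpha> \<le> 1 \<Longrightarrow> 0 \<le> lazy_weight \<alpha> k j"
  by (simp add: lazy_weight_def)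

lemma ret_prob_lazy_div:
  assumes "stochastic P"
  shows "ret_prob (lazy \<alpha> P) (Suc k) x / real (Suc k) = \<alpha>^Suc k / real (Suc k)
       + (\<Sum>j\<le>k. lazy_weight \<alpha> (Suc k) (Suc j) * ret_prob P (Suc j) x)"
proof -
  have "ret_prob (lazy \<alpha> P) (Suc k) x
      = (\<Sum>j\<le>Suc k. real (Suc k choose j) * \<alpha>^(Suc k - j) * (1 - \<alpha>)^j * ret_prob P j x)"
    unfolding ret_prob_def mpow_lazy[OF assms] ..
  also have "\<dots> = \<alpha>^Suc k + (\<Sum>j\<le>k. real (Suc k choose Suc j) * \<alpha>^(k - j) * (1 - \<alpha>)^Suc j
      * ret_prob P (Suc j) x)"
    by (subst sum.atMost_Suc_shift) (simp add: ret_prob_def)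
  finally show ?thesis
    by (simp add: lazy_weight_def add_divide_distrib sum_divide_distrib)
qed

lemma suminf_lazy_weight:
  assumes "0 \<le> \<alpha>" "\<alpha> < 1" "0 \<le> c"
  shows "(\<Sum>k. ennreal (lazy_weight \<alpha> (Suc k) (Suc j) * c)) = ennreal (c / real (Suc j))"
proof (rule suminf_ennreal_eq)
  have "(\<lambda>k. lazy_weight \<alpha> k (Suc j)) sums (1 / real (Suc j))"
    using assms unfolding lazy_weight_def by (intro binomial_div_weight_sums) auto
  then have "(\<lambda>k. lazy_weight \<alpha> (Suc k) (Suc j)) sums (1 / real (Suc j))"
    by (subst sums_Suc_iff) (simp add: lazy_weight_def)
  from sums_mult2[OF this, of c]
  show "(\<lambda>k. lazy_weight \<alpha> (Suc k) (Suc j) * c) sums (c / real (Suc j))"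
    by simp
  show "0 \<le> lazy_weight \<alpha> (Suc k) (Suc j) * c" for k
    using assms by (simp add: lazy_weight_nonneg)
qed

lemma suminf_ennreal_comm:
  fixes f :: "nat \<Rightarrow> nat \<Rightarrow> ennreal"
  shows "(\<Sum>k. \<Sum>i. f k i) = (\<Sum>i. \<Sum>k. f k i)"
proof -
  have "(\<Sum>i. \<Sum>k. f k i) = (\<Sum>i. \<integral>\<^sup>+k. f k i \<partial>count_space UNIV)"
    by (simp add: nn_integral_count_space_nat)
  also have "\<dots> = (\<integral>\<^sup>+k. (\<Sum>i. f k i) \<partial>count_space UNIV)"
    by (rule nn_integral_suminf[symmetric]) simp
  also have "\<dots> = (\<Sum>k. \<Sum>i. f k i)"
    by (simp add: nn_integral_count_space_nat)
  finally show ?thesis ..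
qed

lemma suminf_ret_prob_lazy:
  assumes "stochastic P" "0 \<le> \<alpha>" "\<alpha> \<le> 1"
  shows "(\<Sum>k. ennreal (ret_prob (lazy \<alpha> P) (Suc k) x / real (Suc k)))
       = (\<Sum>k. ennreal (\<alpha>^Suc k / real (Suc k)))
       + (\<Sum>j. \<Sum>k. ennreal (lazy_weight \<alpha> (Suc k) (Suc j) * ret_prob P (Suc j) x))"
proof -
  let ?w = "\<lambda>k j. ennreal (lazy_weight \<alpha> (Suc k) (Suc j) * ret_prob P (Suc j) x)"
  have term_nonneg: "0 \<le> lazy_weight \<alpha> k j * ret_prob P j x" for k j
    using assms by (simp add: lazy_weight_nonneg ret_prob_nonneg)
  have "ennreal (ret_prob (lazy \<alpha> P) (Suc k) x / real (Suc k))
      = ennreal (\<alpha>^Suc k / real (Suc k)) + (\<Sum>j. ?w k j)" for k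
  proof -
    have "(\<Sum>j. ?w k j) = (\<Sum>j\<le>k. ?w k j)"
      by (rule suminf_finite) (auto simp: lazy_weight_def binomial_eq_0 simp del: binomial_Suc_Suc)
    also have "\<dots> = ennreal (\<Sum>j\<le>k. lazy_weight \<alpha> (Suc k) (Suc j) * ret_prob P (Suc j) x)"
      using term_nonneg by simp
    finally have tail: "(\<Sum>j. ?w k j) = \<dots>" .
    have "0 \<le> \<alpha>^Suc k / real (Suc k)"
      using assms by simp
    moreover have "0 \<le> (\<Sum>j\<le>k. lazy_weight \<alpha> (Suc k) (Suc j) * ret_prob P (Suc j) x)"
      using term_nonneg by (simp add: sum_nonneg)
    ultimately show ?thesis
      by (simp only: tail ret_prob_lazy_div[OF assms(1)] ennreal_plus)
  qed
  then have "(\<Sum>k. ennreal (ret_prob (lazy \<alpha> P) (Suc k) x / real (Suc k)))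
      = (\<Sum>k. ennreal (\<alpha>^Suc k / real (Suc k)) + (\<Sum>j. ?w k j))"
    by (simp only:)
  also have "\<dots> = (\<Sum>k. ennreal (\<alpha>^Suc k / real (Suc k))) + (\<Sum>k. \<Sum>j. ?w k j)"
    by (rule suminf_add[symmetric]) (rule summableI)+
  also have "(\<Sum>k. \<Sum>j. ?w k j) = (\<Sum>j. \<Sum>k. ?w k j)"
    by (rule suminf_ennreal_comm)
  finally show ?thesis .
qed

lemma suminf_ereal_eq_enn2ereal:
  assumes "\<And>k. 0 \<le> f k"
  shows "(\<Sum>k. ereal (f k)) = enn2ereal (\<Sum>k. ennreal (f k))"
proof -
  have "ereal (f k) = enn2ereal (ennreal (f k))" for k
    using assms by simp
  then show ?thesis
    by (simp only: suminf_enn2ereal)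
qed

theorem lemma3p5:
  fixes P :: "'a::countable \<Rightarrow> 'a \<Rightarrow> real" and \<alpha> :: real and x :: 'a
  assumes "stochastic P" and "0 \<le> \<alpha>" and "\<alpha> \<le> 1"
  shows "(\<Sum>k. ereal (ret_prob (lazy \<alpha> P) (Suc k) x / real (Suc k)))
         = neg_log1m \<alpha> + (\<Sum>k. ereal (ret_prob P (Suc k) x / real (Suc k)))"
proof -
  define L where "L = (\<Sum>k. ennreal (\<alpha>^Suc k / real (Suc k)))"
  define R where "R = (\<Sum>j. ennreal (ret_prob P (Suc j) x / real (Suc j)))"
  define D where
    "D = (\<Sum>j. \<Sum>k. ennreal (lazy_weight \<alpha> (Suc k) (Suc j) * ret_prob P (Suc j) x))"
  have L: "enn2ereal L = neg_log1m \<alpha>"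
    unfolding L_def neg_log1m_series[OF assms(2,3), symmetric]
    using assms(2) by (intro suminf_ereal_eq_enn2ereal[symmetric]) simp
  have R: "(\<Sum>k. ereal (ret_prob P (Suc k) x / real (Suc k))) = enn2ereal R"
    unfolding R_def using assms(1) by (intro suminf_ereal_eq_enn2ereal) (simp add: ret_prob_nonneg)
  have Q: "(\<Sum>k. ereal (ret_prob (lazy \<alpha> P) (Suc k) x / real (Suc k))) = enn2ereal (L + D)"
    unfolding L_def D_def suminf_ret_prob_lazy[OF assms, symmetric]
    using stochastic_lazy[OF assms] by (intro suminf_ereal_eq_enn2ereal) (simp add: ret_prob_nonneg)
  have "L + D = L + R"
  proof (cases "\<alpha> = 1")
    case True
    then have "L = top"
      using L by (simp add: neg_log1m_def)
    then show ?thesis by simp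
  next
    case False
    with assms(3) have "\<alpha> < 1" by simp
    then have "D = R"
      unfolding D_def R_def
      by (simp only: suminf_lazy_weight[OF assms(2) _ ret_prob_nonneg[OF assms(1)]])
    then show ?thesis by simp
  qed
  then show ?thesis
    by (simp only: Q R L plus_ennreal.rep_eq)
qed

end
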